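(* Let $Q$ be a quadrangulation with a strong labeling. Walking along the boundary of any bounded face of $Q$ in clockwise order, the labels of consecutive angles change precisely when moving from a black vertex to a white vertex.
   Context: A quadrangulation is a simple plane graph with at least four vertices all of whose faces (including the outer face) are bounded by $4$-cycles; it is bipartite, and its vertices are properly colored black and white. An angle is an incidence of a vertex with a face (a corner of a face at a vertex). A strong labeling of $Q$ is a map from the angles of $Q$ to $\{0,1\}$ such that: (G0) the two black vertices on the outer face are named $s_0$ and $s_1$, and all angles at $s_i$ are labeled $i$; (G1) for each vertex $v\notin\{s_0,s_1\}$ the labels around $v$ form one non-empty cyclic interval of $1$s and one non-empty cyclic interval of $0$s; (G2) for each edge, the two labels on the two sides of the edge coincide at one endpoint and differ at the other; (G3) the labels in each bounded face, read cyclically, are $0,0,1,1$, and reading the labels of the outer face in clockwise order starting at $s_0$ they are $0,0,1,1$. *)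

theory Defs
  imports Main
begin

text \<open>
  Plane graphs are represented by combinatorial maps (rotation systems).
  D is a finite set of darts (directed half-edges); alpha is the fixed-point-free
  involution reversing a dart; sigma is the counterclockwise rotation of the darts
  leaving a vertex; tail d is the vertex a dart d leaves; head d = tail (alpha d).
  Vertices are the tail-fibres, which must be exactly the sigma-orbits.
  Faces are the orbits of phi = sigma o alpha; with sigma counterclockwise, phi
  walks along each face with the face on the right, i.e. bounded faces are
  traversed clockwise.  Planarity of the (connected) map is expressed by
  Euler's formula V - E + F = 2.

  Angles: the dart d represents the angle (corner) at the vertex head d between
  the darts alpha d and sigma (alpha d) = phi d; this corner lies in the face
  (phi-orbit) of d.  Consecutive angles in clockwise order along a face are
  d and phi d.  The angles around a vertex in counterclockwise order are
  d, rho d, rho (rho d), ... with rho d = alpha (sigma (alpha d)).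
\<close>

definition orb :: "('a \<Rightarrow> 'a) \<Rightarrow> 'a \<Rightarrow> 'a set" where
  "orb f x = {(f ^^ n) x | n. True}"

definition phi :: "('d \<Rightarrow> 'd) \<Rightarrow> ('d \<Rightarrow> 'd) \<Rightarrow> 'd \<Rightarrow> 'd" where
  "phi \<alpha> \<sigma> d = \<sigma> (\<alpha> d)"

definition rho :: "('d \<Rightarrow> 'd) \<Rightarrow> ('d \<Rightarrow> 'd) \<Rightarrow> 'd \<Rightarrow> 'd" where
  "rho \<alpha> \<sigma> d = \<alpha> (\<sigma> (\<alpha> d))"

definition head :: "('d \<Rightarrow> 'd) \<Rightarrow> ('d \<Rightarrow> 'v) \<Rightarrow> 'd \<Rightarrow> 'v" where
  "head \<alpha> tail d = tail (\<alpha> d)"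

definition faces :: "'d set \<Rightarrow> ('d \<Rightarrow> 'd) \<Rightarrow> ('d \<Rightarrow> 'd) \<Rightarrow> 'd set set" where
  "faces D \<alpha> \<sigma> = (\<lambda>d. orb (phi \<alpha> \<sigma>) d) ` D"

definition edges :: "'d set \<Rightarrow> ('d \<Rightarrow> 'd) \<Rightarrow> 'd set set" where
  "edges D \<alpha> = (\<lambda>d. {d, \<alpha> d}) ` D"

text \<open>A connected plane map (genus 0 via Euler's formula), with a distinguished
  outer face, the face containing the dart r.\<close>
definition plane_map ::
  "'d set \<Rightarrow> ('d \<Rightarrow> 'd) \<Rightarrow> ('d \<Rightarrow> 'd) \<Rightarrow> ('d \<Rightarrow> 'v) \<Rightarrow> 'd \<Rightarrow> bool" where
  "plane_map D \<alpha> \<sigma> tail r \<longleftrightarrow>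
     finite D \<and> r \<in> D \<and>
     bij_betw \<alpha> D D \<and> bij_betw \<sigma> D D \<and>
     (\<forall>d\<in>D. \<alpha> d \<noteq> d \<and> \<alpha> (\<alpha> d) = d) \<and>
     (\<forall>d\<in>D. \<forall>e\<in>D. tail d = tail e \<longleftrightarrow> e \<in> orb \<sigma> d) \<and>
     (\<forall>d\<in>D. \<forall>e\<in>D. (d, e) \<in> ({(x, \<alpha> x) | x. x \<in> D} \<union> {(x, \<sigma> x) | x. x \<in> D})\<^sup>*) \<and>
     int (card (tail ` D)) - int (card (edges D \<alpha>)) + int (card (faces D \<alpha> \<sigma>)) = 2"

definition quadrangulation ::
  "'d set \<Rightarrow> ('d \<Rightarrow> 'd) \<Rightarrow> ('d \<Rightarrow> 'd) \<Rightarrow> ('d \<Rightarrow> 'v) \<Rightarrow> 'd \<Rightarrow> ('v \<Rightarrow> bool) \<Rightarrow> bool" where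
  "quadrangulation D \<alpha> \<sigma> tail r black \<longleftrightarrow>
     plane_map D \<alpha> \<sigma> tail r \<and>
     (\<forall>d\<in>D. tail d \<noteq> head \<alpha> tail d) \<and>
     (\<forall>d\<in>D. \<forall>e\<in>D. tail d = tail e \<and> head \<alpha> tail d = head \<alpha> tail e \<longrightarrow> d = e) \<and>
     card (tail ` D) \<ge> 4 \<and>
     (\<forall>d\<in>D. card (orb (phi \<alpha> \<sigma>) d) = 4 \<and> inj_on (head \<alpha> tail) (orb (phi \<alpha> \<sigma>) d)) \<and>
     (\<forall>d\<in>D. black (tail d) \<noteq> black (head \<alpha> tail d))"

definition degree :: "'d set \<Rightarrow> ('d \<Rightarrow> 'd) \<Rightarrow> ('d \<Rightarrow> 'v) \<Rightarrow> 'v \<Rightarrow> nat" where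
  "degree D \<alpha> tail v = card {d\<in>D. head \<alpha> tail d = v}"

text \<open>Strong labeling: lab d is the label of the angle represented by dart d.\<close>
definition strong_labeling ::
  "'d set \<Rightarrow> ('d \<Rightarrow> 'd) \<Rightarrow> ('d \<Rightarrow> 'd) \<Rightarrow> ('d \<Rightarrow> 'v) \<Rightarrow> 'd \<Rightarrow> ('v \<Rightarrow> bool)
    \<Rightarrow> 'v \<Rightarrow> 'v \<Rightarrow> ('d \<Rightarrow> nat) \<Rightarrow> bool" where
  "strong_labeling D \<alpha> \<sigma> tail r black s0 s1 lab \<longleftrightarrow>
     (\<forall>d\<in>D. lab d \<in> {0, 1}) \<and>
     \<comment> \<open>(G0)\<close>
     s0 \<noteq> s1 \<and>
     {v \<in> head \<alpha> tail ` orb (phi \<alpha> \<sigma>) r. black v} = {s0, s1} \<and>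
     (\<forall>d\<in>D. head \<alpha> tail d = s0 \<longrightarrow> lab d = 0) \<and>
     (\<forall>d\<in>D. head \<alpha> tail d = s1 \<longrightarrow> lab d = 1) \<and>
     \<comment> \<open>(G1)\<close>
     (\<forall>v \<in> tail ` D. v \<notin> {s0, s1} \<longrightarrow>
        (\<exists>d0\<in>D. \<exists>k. head \<alpha> tail d0 = v \<and> 0 < k \<and> k < degree D \<alpha> tail v \<and>
           (\<forall>i < degree D \<alpha> tail v.
              lab ((rho \<alpha> \<sigma> ^^ i) d0) = (if i < k then 1 else 0)))) \<and>
     \<comment> \<open>(G2): at head d the two angles beside edge {d, alpha d} are d' and d (rho d' = d);
         at head (alpha d) they are e' and alpha d (rho e' = alpha d)\<close>
     (\<forall>d\<in>D. \<forall>d'\<in>D. \<forall>e'\<in>D. rho \<alpha> \<sigma> d' = d \<longrightarrow> rho \<alpha> \<sigma> e' = \<alpha> d \<longrightarrow>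
        ((lab d' = lab d) \<noteq> (lab e' = lab (\<alpha> d)))) \<and>
     \<comment> \<open>(G3) bounded faces: cyclically 0,0,1,1\<close>
     (\<forall>d\<in>D. d \<notin> orb (phi \<alpha> \<sigma>) r \<longrightarrow>
        (\<exists>e \<in> orb (phi \<alpha> \<sigma>) d. lab e = 0 \<and> lab (phi \<alpha> \<sigma> e) = 0 \<and>
           lab ((phi \<alpha> \<sigma> ^^ 2) e) = 1 \<and> lab ((phi \<alpha> \<sigma> ^^ 3) e) = 1)) \<and>
     \<comment> \<open>(G3) outer face: geometric clockwise order around the outer face is the reverse
         of the phi-order; starting at the angle of s0 the labels are 0,0,1,1\<close>
     (\<exists>z \<in> orb (phi \<alpha> \<sigma>) r. head \<alpha> tail z = s0 \<and>
        lab z = 0 \<and> lab ((phi \<alpha> \<sigma> ^^ 3) z) = 0 \<and>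
        lab ((phi \<alpha> \<sigma> ^^ 2) z) = 1 \<and> lab (phi \<alpha> \<sigma> z) = 1)"

end

theory Submission
  imports Defs
begin

text \<open>
  Say that \<open>change_iff_black d\<close> holds if the label changes from angle \<open>d\<close> to the next
  angle \<open>\<phi> d\<close> of its face exactly when the vertex \<open>head d\<close> of \<open>d\<close> is black.
  Around a face the labels read \<open>0,0,1,1\<close> cyclically, so label changes alternate, and
  so do the colours of the corners; hence the property is constant along each face. The two faces beside an edge each
  make one step along it, starting from its two differently coloured ends; as labels are
  \<open>0/1\<close>, (G2) says exactly one of these two steps changes the label, so the property is
  also shared by the two faces. By connectivity it holds everywhere once it holds on the
  outer face, which it does because that face starts at the black vertex \<open>s\<^sub>0\<close> with
  labels \<open>0,1\<close>. As colours alternate, the theorem follows.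
\<close>

lemma funpow_in_orb: "(f ^^ n) x \<in> orb f x"
  unfolding orb_def by blast

lemma orb_eq_image_if_funpow_eq:
  assumes "(f ^^ n) x = x" "0 < n"
  shows "orb f x = (\<lambda>m. (f ^^ m) x) ` {..<n}"
proof
  show "orb f x \<subseteq> (\<lambda>m. (f ^^ m) x) ` {..<n}"
  proof
    fix y assume "y \<in> orb f x"
    then obtain m where "y = (f ^^ m) x" unfolding orb_def by blast
    then have "y = (f ^^ (m mod n)) x" using funpow_mod_eq[OF assms(1)] by simp
    then show "y \<in> (\<lambda>m. (f ^^ m) x) ` {..<n}" using assms(2) by simp
  qed
qed (auto simp: orb_def)

lemma orb_subset_if_in_orb:
  assumes "y \<in> orb f x"
  shows "orb f y \<subseteq> orb f x"
proof
  fix z assume "z \<in> orb f y"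
  then obtain k m where "y = (f ^^ k) x" "z = (f ^^ m) y" using assms unfolding orb_def by blast
  then have "z = (f ^^ (m + k)) x" by (simp add: funpow_add)
  then show "z \<in> orb f x" using funpow_in_orb by metis
qed

lemma orb_eq_if_funpow_eq:
  assumes "(f ^^ n) x = x" "0 < n" "y \<in> orb f x"
  shows "orb f y = orb f x"
proof
  obtain k where y: "y = (f ^^ k) x" using assms(3) unfolding orb_def by blast
  have "(f ^^ (n * k - k)) y = (f ^^ (n * k)) x"
    using assms(2) by (simp add: y funpow_add[symmetric, THEN fun_cong, simplified])
  also have "\<dots> = x" using funpow_mod_eq[OF assms(1), of "n * k"] by simp
  finally have "x \<in> orb f y" using funpow_in_orb by metis
  then show "orb f x \<subseteq> orb f y" by (rule orb_subset_if_in_orb)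
qed (rule orb_subset_if_in_orb[OF assms(3)])

lemma funpow_card_orb_eq:
  assumes f: "bij_betw f D D" and x: "x \<in> D" and fin: "finite (orb f x)"
  shows "(f ^^ card (orb f x)) x = x"
proof -
  let ?c = "card (orb f x)"
  have in_D: "(f ^^ m) x \<in> D" for m using bij_betw_apply[OF bij_betw_funpow[OF f] x] .
  have "\<not> inj_on (\<lambda>m. (f ^^ m) x) {..?c}"
  proof
    assume "inj_on (\<lambda>m. (f ^^ m) x) {..?c}"
    then have "card ((\<lambda>m. (f ^^ m) x) ` {..?c}) = Suc ?c" by (simp add: card_image)
    moreover have "(\<lambda>m. (f ^^ m) x) ` {..?c} \<subseteq> orb f x" using funpow_in_orb by (rule image_subsetI)
    ultimately show False using card_mono[OF fin] by (metis Suc_n_not_le_n)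
  qed
  then obtain i j where ij: "i < j" "j \<le> ?c" "(f ^^ i) x = (f ^^ j) x"
    unfolding inj_on_def by (metis atMost_iff nat_neq_iff)
  have "(f ^^ i) ((f ^^ (j - i)) x) = (f ^^ i) x"
    using ij by (simp flip: funpow_add[THEN fun_cong, simplified])
  then have period: "(f ^^ (j - i)) x = x"
    using inj_onD[OF bij_betw_imp_inj_on[OF bij_betw_funpow[OF f]]] in_D x by blast
  have "?c \<le> j - i"
    using orb_eq_image_if_funpow_eq[OF period] ij(1) card_image_le[of "{..<j - i}"] by simp
  with ij(2) have "j - i = ?c" by linarith
  with period show ?thesis by simp
qed

lemma orb_eq_if_funpow_4:
  assumes "(f ^^ 4) x = x"
  shows "orb f x = {x, f x, f (f x), f (f (f x))}"
  using orb_eq_image_if_funpow_eq[OF assms] by (auto simp: numeral_eq_Suc lessThan_Suc)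

lemma changes_alternate_on_4cycle:
  assumes "(f ^^ 4) u = u" "x \<in> orb f u"
    and "g u = g (f u)" "g (f u) \<noteq> g (f (f u))"
    and "g (f (f u)) = g (f (f (f u)))" "g (f (f (f u))) \<noteq> g u"
  shows "g x \<noteq> g (f x) \<longleftrightarrow> g (f x) = g (f (f x))"
proof -
  have "f (f (f (f u))) = u" using assms(1) by (simp add: numeral_eq_Suc)
  then show ?thesis using assms(2-) unfolding orb_eq_if_funpow_4[OF assms(1)] by auto
qed

lemma rho_eq_alpha_phi: "rho \<alpha> \<sigma> d = \<alpha> (phi \<alpha> \<sigma> d)"
  by (simp add: rho_def phi_def)

locale strongly_labeled_quadrangulation =
  fixes D :: "'d set" and \<alpha> \<sigma> :: "'d \<Rightarrow> 'd" and tail :: "'d \<Rightarrow> 'v"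
    and r :: 'd and black :: "'v \<Rightarrow> bool" and s0 s1 :: 'v and lab :: "'d \<Rightarrow> nat"
  assumes quadrangulation: "quadrangulation D \<alpha> \<sigma> tail r black"
    and strong_labeling: "strong_labeling D \<alpha> \<sigma> tail r black s0 s1 lab"
begin

abbreviation \<phi> :: "'d \<Rightarrow> 'd" where "\<phi> \<equiv> phi \<alpha> \<sigma>"

lemma r_in_D: "r \<in> D"
  and bij_alpha: "bij_betw \<alpha> D D" and bij_sigma: "bij_betw \<sigma> D D"
  and alpha_alpha: "\<And>d. d \<in> D \<Longrightarrow> \<alpha> (\<alpha> d) = d"
  and tail_eq_iff: "\<And>d e. d \<in> D \<Longrightarrow> e \<in> D \<Longrightarrow> tail d = tail e \<longleftrightarrow> e \<in> orb \<sigma> d"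
  and connected: "\<And>d e. d \<in> D \<Longrightarrow> e \<in> D \<Longrightarrow>
         (d, e) \<in> ({(x, \<alpha> x) | x. x \<in> D} \<union> {(x, \<sigma> x) | x. x \<in> D})\<^sup>*"
  and proper_colouring: "\<And>d. d \<in> D \<Longrightarrow> black (tail d) \<noteq> black (head \<alpha> tail d)"
  and card_face: "\<And>d. d \<in> D \<Longrightarrow> card (orb \<phi> d) = 4"
  using quadrangulation unfolding quadrangulation_def plane_map_def by auto

lemma lab_binary: "\<And>d. d \<in> D \<Longrightarrow> lab d \<in> {0, 1}"
  and edge_labels: "\<And>d d' e'. d \<in> D \<Longrightarrow> d' \<in> D \<Longrightarrow> e' \<in> D \<Longrightarrow>
         rho \<alpha> \<sigma> d' = d \<Longrightarrow> rho \<alpha> \<sigma> e' = \<alpha> d \<Longrightarrow> (lab d' = lab d) \<noteq> (lab e' = lab (\<alpha> d))"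
  and bounded_face_labels: "\<And>d. d \<in> D \<Longrightarrow> d \<notin> orb \<phi> r \<Longrightarrow>
         \<exists>e \<in> orb \<phi> d. lab e = 0 \<and> lab (\<phi> e) = 0 \<and> lab ((\<phi> ^^ 2) e) = 1 \<and> lab ((\<phi> ^^ 3) e) = 1"
  and outer_face_labels: "\<exists>z \<in> orb \<phi> r. head \<alpha> tail z = s0 \<and>
         lab z = 0 \<and> lab ((\<phi> ^^ 3) z) = 0 \<and> lab ((\<phi> ^^ 2) z) = 1 \<and> lab (\<phi> z) = 1"
  and black_s0: "black s0"
  using strong_labeling unfolding strong_labeling_def by auto

lemma bij_phi: "bij_betw \<phi> D D"
  using bij_betw_trans[OF bij_alpha bij_sigma] by (simp add: phi_def[abs_def] comp_def)

lemma phi_in_D: "d \<in> D \<Longrightarrow> \<phi> d \<in> D"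
  using bij_betw_apply[OF bij_phi] .

lemma funpow_phi_in_D: "d \<in> D \<Longrightarrow> (\<phi> ^^ n) d \<in> D"
  using bij_betw_apply[OF bij_betw_funpow[OF bij_phi]] .

lemma alpha_in_D: "d \<in> D \<Longrightarrow> \<alpha> d \<in> D"
  using bij_betw_apply[OF bij_alpha] .

lemma funpow_phi_4: "d \<in> D \<Longrightarrow> (\<phi> ^^ 4) d = d"
  using funpow_card_orb_eq[OF bij_phi, of d] card_face[of d] by (simp add: card_ge_0_finite)

lemma phi_funpow_phi_3: "d \<in> D \<Longrightarrow> \<phi> ((\<phi> ^^ 3) d) = d"
  using funpow_phi_4 by (simp add: numeral_eq_Suc)

lemma face_eq: "d \<in> D \<Longrightarrow> e \<in> orb \<phi> d \<Longrightarrow> orb \<phi> e = orb \<phi> d"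
  using orb_eq_if_funpow_eq[OF funpow_phi_4] by simp

lemma tail_phi:
  assumes d: "d \<in> D"
  shows "tail (\<phi> d) = head \<alpha> tail d"
proof -
  have "\<sigma> (\<alpha> d) \<in> orb \<sigma> (\<alpha> d)" using funpow_in_orb[where n = 1] by simp
  then have "tail (\<alpha> d) = tail (\<sigma> (\<alpha> d))"
    using tail_eq_iff[OF alpha_in_D[OF d] bij_betw_apply[OF bij_sigma alpha_in_D[OF d]]] by simp
  then show ?thesis by (simp add: phi_def head_def)
qed

lemma black_head_phi: "d \<in> D \<Longrightarrow> black (head \<alpha> tail (\<phi> d)) \<longleftrightarrow> \<not> black (head \<alpha> tail d)"
  using proper_colouring[OF phi_in_D] tail_phi by auto

lemma face_labels_aabb:
  assumes d: "d \<in> D"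
  obtains u where "u \<in> D" "d \<in> orb \<phi> u"
    and "lab u = lab (\<phi> u)" "lab (\<phi> u) \<noteq> lab (\<phi> (\<phi> u))"
    and "lab (\<phi> (\<phi> u)) = lab (\<phi> (\<phi> (\<phi> u)))" "lab (\<phi> (\<phi> (\<phi> u))) \<noteq> lab u"
proof (cases "d \<in> orb \<phi> r")
  case True
  obtain z where z: "z \<in> orb \<phi> r" "lab z = 0" "lab (\<phi> z) = 1"
      "lab (\<phi> (\<phi> z)) = 1" "lab (\<phi> (\<phi> (\<phi> z))) = 0"
    using outer_face_labels by (auto simp: numeral_eq_Suc)
  have z_in_D: "z \<in> D" using z(1) funpow_phi_in_D[OF r_in_D] unfolding orb_def by blast
  have "orb \<phi> (\<phi> z) = orb \<phi> r"
    using face_eq[OF r_in_D z(1)] face_eq[OF z_in_D funpow_in_orb[where n = 1]] by simp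
  then have "d \<in> orb \<phi> (\<phi> z)" using True by simp
  moreover have "\<phi> (\<phi> (\<phi> (\<phi> z))) = z" using funpow_phi_4[OF z_in_D] by (simp add: numeral_eq_Suc)
  ultimately show thesis using that[OF phi_in_D[OF z_in_D]] z by simp
next
  case False
  then obtain e where e: "e \<in> orb \<phi> d" "lab e = 0" "lab (\<phi> e) = 0"
      "lab (\<phi> (\<phi> e)) = 1" "lab (\<phi> (\<phi> (\<phi> e))) = 1"
    using bounded_face_labels[OF d] by (auto simp: numeral_eq_Suc)
  have "e \<in> D" using e(1) funpow_phi_in_D[OF d] unfolding orb_def by blast
  moreover have "d \<in> orb \<phi> e" using face_eq[OF d e(1)] funpow_in_orb[where n = 0] by fastforce
  ultimately show thesis using that e by simp
qed

lemma label_changes_alternate: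
  assumes "d \<in> D"
  shows "lab d \<noteq> lab (\<phi> d) \<longleftrightarrow> lab (\<phi> d) = lab (\<phi> (\<phi> d))"
proof -
  obtain u where "u \<in> D" "d \<in> orb \<phi> u"
    and "lab u = lab (\<phi> u)" "lab (\<phi> u) \<noteq> lab (\<phi> (\<phi> u))"
    and "lab (\<phi> (\<phi> u)) = lab (\<phi> (\<phi> (\<phi> u)))" "lab (\<phi> (\<phi> (\<phi> u))) \<noteq> lab u"
    using face_labels_aabb[OF assms] .
  then show ?thesis using changes_alternate_on_4cycle[OF funpow_phi_4] by blast
qed

definition change_iff_black :: "'d \<Rightarrow> bool" where
  "change_iff_black d \<longleftrightarrow> (lab d \<noteq> lab (\<phi> d) \<longleftrightarrow> black (head \<alpha> tail d))"

lemma change_iff_black_phi: "d \<in> D \<Longrightarrow> change_iff_black (\<phi> d) \<longleftrightarrow> change_iff_black d"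
  unfolding change_iff_black_def using label_changes_alternate black_head_phi by auto

lemma change_iff_black_funpow_phi:
  "d \<in> D \<Longrightarrow> change_iff_black ((\<phi> ^^ n) d) \<longleftrightarrow> change_iff_black d"
  by (induction n) (simp_all add: change_iff_black_phi funpow_phi_in_D)

lemma change_iff_black_alpha:
  assumes x: "x \<in> D"
  shows "change_iff_black (\<alpha> x) \<longleftrightarrow> change_iff_black x"
proof -
  define y y' where "y = (\<phi> ^^ 3) x" and "y' = (\<phi> ^^ 3) (\<alpha> x)"
  have in_D: "y \<in> D" "y' \<in> D" "\<alpha> x \<in> D"
    using funpow_phi_in_D alpha_in_D x by (simp_all add: y_def y'_def)
  have phi_y: "\<phi> y = x" "\<phi> y' = \<alpha> x"
    using phi_funpow_phi_3 x alpha_in_D by (simp_all add: y_def y'_def)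
  have "rho \<alpha> \<sigma> y' = x" "rho \<alpha> \<sigma> y = \<alpha> x"
    using phi_y alpha_alpha[OF x] by (simp_all add: rho_eq_alpha_phi)
  then have "(lab y' = lab x) \<noteq> (lab y = lab (\<alpha> x))"
    using edge_labels[OF x in_D(2,1)] by blast
  then have changes: "(lab y \<noteq> lab (\<phi> y)) \<noteq> (lab y' \<noteq> lab (\<phi> y'))"
    using phi_y lab_binary[OF x] lab_binary[OF in_D(1)] lab_binary[OF in_D(2)]
      lab_binary[OF in_D(3)]
    by auto
  have "head \<alpha> tail y = tail x" "head \<alpha> tail y' = head \<alpha> tail x"
    using tail_phi[OF in_D(1)] tail_phi[OF in_D(2)] phi_y by (simp_all add: head_def)
  then have colours: "black (head \<alpha> tail y) \<noteq> black (head \<alpha> tail y')"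
    using proper_colouring[OF x] by simp
  have "change_iff_black y \<longleftrightarrow> change_iff_black y'"
    using changes colours unfolding change_iff_black_def by blast
  then show ?thesis
    using change_iff_black_phi[OF in_D(1)] change_iff_black_phi[OF in_D(2)] phi_y by simp
qed

lemma change_iff_black_outer_face: "change_iff_black r"
proof -
  obtain z where z: "z \<in> orb \<phi> r" "head \<alpha> tail z = s0" "lab z = 0" "lab (\<phi> z) = 1"
    using outer_face_labels by blast
  then obtain n where "z = (\<phi> ^^ n) r" unfolding orb_def by blast
  moreover have "change_iff_black z" using z black_s0 unfolding change_iff_black_def by simp
  ultimately show ?thesis using change_iff_black_funpow_phi[OF r_in_D] by simp
qed

lemma change_iff_black_everywhere:
  assumes "d \<in> D"
  shows "change_iff_black d"
  using connected[OF r_in_D assms]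
proof (induction rule: rtrancl_induct)
  case base
  show ?case by (rule change_iff_black_outer_face)
next
  case (step d e)
  then obtain x where "x \<in> D" "d = x" "e = \<alpha> x \<or> e = \<sigma> x" by blast
  moreover have "\<sigma> x = \<phi> (\<alpha> x)" if "x \<in> D" using that alpha_alpha by (simp add: phi_def)
  ultimately show ?case
    using step.IH change_iff_black_alpha change_iff_black_phi alpha_in_D by auto
qed

lemma label_changes_iff_black_to_white:
  "d \<in> D \<Longrightarrow> lab d \<noteq> lab (\<phi> d) \<longleftrightarrow>
     black (head \<alpha> tail d) \<and> \<not> black (head \<alpha> tail (\<phi> d))"
  using change_iff_black_everywhere black_head_phi unfolding change_iff_black_def by blast

end

theorem lemma9:
  fixes D :: "'d set" and \<alpha> \<sigma> :: "'d \<Rightarrow> 'd" and tail :: "'d \<Rightarrow> 'v"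
    and r :: 'd and black :: "'v \<Rightarrow> bool" and s0 s1 :: 'v and lab :: "'d \<Rightarrow> nat"
  assumes "quadrangulation D \<alpha> \<sigma> tail r black"
    and "strong_labeling D \<alpha> \<sigma> tail r black s0 s1 lab"
  shows "\<forall>d\<in>D. d \<notin> orb (phi \<alpha> \<sigma>) r \<longrightarrow>
           (lab d \<noteq> lab (phi \<alpha> \<sigma> d) \<longleftrightarrow>
              black (head \<alpha> tail d) \<and> \<not> black (head \<alpha> tail (phi \<alpha> \<sigma> d)))"
proof -
  interpret strongly_labeled_quadrangulation D \<alpha> \<sigma> tail r black s0 s1 lab
    using assms by unfold_locales
  show ?thesis using label_changes_iff_black_to_white by blast
qed

end
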